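(* $k$-monotonicity is extendable: for any finite poset $\mathcal{P}$, any subset $X\subseteq\mathcal{P}$, and any function $f\colon X\to\{0,1\}$ that is $k$-monotone on $X$, there exists $g\colon\mathcal{P}\to\{0,1\}$ with $g(x)=f(x)$ for all $x\in X$ such that $g$ is $k$-monotone on $\mathcal{P}$.
   Context: For a subset $S$ of a poset (with the induced order), a function $f\colon S\to\{0,1\}$ is $k$-monotone on $S$ if there is no chain $x_1\prec\cdots\prec x_{k+1}$ of elements of $S$ with $f(x_1)=1$ and $f(x_i)\neq f(x_{i+1})$ for all $i\in[k]$. *)

theory Defs
  imports Main
begin

text \<open>A function f : S -> {0,1} (encoded as bool, True = 1) is k-monotone on S
  (with the order induced from the ambient poset) iff there is no chain
  x_0 < x_1 < ... < x_k of elements of S with f(x_0) = 1 and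
  f(x_i) different from f(x_(i+1)) for all i < k (indices shifted by one).\<close>
definition k_monotone_on :: "nat \<Rightarrow> 'a::order set \<Rightarrow> ('a \<Rightarrow> bool) \<Rightarrow> bool" where
  "k_monotone_on k S f \<longleftrightarrow>
     \<not> (\<exists>x::nat \<Rightarrow> 'a. (\<forall>i\<le>k. x i \<in> S) \<and> (\<forall>i<k. x i < x (Suc i)) \<and>
            f (x 0) \<and> (\<forall>i<k. f (x i) \<noteq> f (x (Suc i))))"

end

theory Submission
  imports Defs
begin

text \<open>For y in P let r(y) be the maximal length of an alternating chain of X that starts with a
  1-point and ends at or below y. Then r is monotone, bounded by k since f is k-monotone,
  and for y in X the parity of r(y) is f(y): a chain of length r(y) ending at z \<le> y has
  f(z) = odd r(y), and if f(y) differed, the chain could be prolonged by y. Hence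
  g(y) = odd r(y) extends f, and g is k-monotone on all of P because along an alternating
  chain for g the value r strictly increases from 1 on.\<close>

definition alternating_chain :: "'a::order set \<Rightarrow> ('a \<Rightarrow> bool) \<Rightarrow> nat \<Rightarrow> 'a \<Rightarrow> bool" where
  "alternating_chain X f L z \<longleftrightarrow>
     (\<exists>x. L \<ge> 1 \<and> (\<forall>i<L. x i \<in> X) \<and> (\<forall>i. Suc i < L \<longrightarrow> x i < x (Suc i)) \<and> f (x 0) \<and>
          (\<forall>i. Suc i < L \<longrightarrow> f (x i) \<noteq> f (x (Suc i))) \<and> x (L - 1) = z)"

lemma alternating_chain_length_le:
  assumes "k_monotone_on k X f" "alternating_chain X f L z"
  shows "L \<le> k"
proof (rule ccontr)
  assume "\<not> L \<le> k"
  moreover obtain x where "\<forall>i<L. x i \<in> X" "\<forall>i. Suc i < L \<longrightarrow> x i < x (Suc i)" "f (x 0)"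
      "\<forall>i. Suc i < L \<longrightarrow> f (x i) \<noteq> f (x (Suc i))"
    using assms(2) unfolding alternating_chain_def by blast
  ultimately have "(\<forall>i\<le>k. x i \<in> X) \<and> (\<forall>i<k. x i < x (Suc i)) \<and> f (x 0) \<and>
      (\<forall>i<k. f (x i) \<noteq> f (x (Suc i)))"
    by auto
  then show False
    using assms(1) unfolding k_monotone_on_def by blast
qed

lemma alternating_chain_last_value:
  assumes "alternating_chain X f L z"
  shows "f z = odd L"
proof -
  obtain x where x: "L \<ge> 1" "f (x 0)" "\<forall>i. Suc i < L \<longrightarrow> f (x i) \<noteq> f (x (Suc i))"
      "x (L - 1) = z"
    using assms unfolding alternating_chain_def by blast
  have "f (x i) = even i" if "i < L" for i
    using that by (induction i) (use x in auto)
  from this[of "L - 1"] x show ?thesis by (cases L) auto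
qed

lemma alternating_chain_singleton: "y \<in> X \<Longrightarrow> f y \<Longrightarrow> alternating_chain X f 1 y"
  unfolding alternating_chain_def by (intro exI[of _ "\<lambda>_. y"]) auto

lemma alternating_chain_snoc:
  assumes "alternating_chain X f L z" "z < y" "y \<in> X" "f y \<noteq> f z"
  shows "alternating_chain X f (Suc L) y"
proof -
  obtain x where x: "L \<ge> 1" "\<forall>i<L. x i \<in> X" "\<forall>i. Suc i < L \<longrightarrow> x i < x (Suc i)"
      "f (x 0)" "\<forall>i. Suc i < L \<longrightarrow> f (x i) \<noteq> f (x (Suc i))" "x (L - 1) = z"
    using assms(1) unfolding alternating_chain_def by blast
  define x' where "x' = x(L := y)"
  have step: "x' i < x' (Suc i) \<and> f (x' i) \<noteq> f (x' (Suc i))" if "Suc i < Suc L" for i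
  proof (cases "Suc i = L")
    case True
    then have "x' i = z" "x' (Suc i) = y" using x(6) unfolding x'_def by auto
    then show ?thesis using assms(2,4) by simp
  next
    case False
    then show ?thesis using that x(3,5) unfolding x'_def by auto
  qed
  have "x' i \<in> X" if "i < Suc L" for i
    using that x(2) assms(3) unfolding x'_def by (cases "i = L") auto
  moreover have "f (x' 0)" "x' (Suc L - 1) = y"
    using x(1,4) unfolding x'_def by auto
  ultimately show ?thesis
    unfolding alternating_chain_def using step by (intro exI[of _ x']) auto
qed

definition alternating_rank :: "'a::order set \<Rightarrow> ('a \<Rightarrow> bool) \<Rightarrow> 'a \<Rightarrow> nat" where
  "alternating_rank X f y = Max (insert 0 {L. \<exists>z\<le>y. alternating_chain X f L z})"

context
  fixes k :: nat and X :: "'a::order set" and f :: "'a \<Rightarrow> bool"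
  assumes k_mono: "k_monotone_on k X f"
begin

private lemma chain_lengths_bounded:
  "insert 0 {L. \<exists>z\<le>y. alternating_chain X f L z} \<subseteq> {..k}"
  using alternating_chain_length_le[OF k_mono] by auto

private lemma finite_chain_lengths:
  "finite (insert 0 {L. \<exists>z\<le>y. alternating_chain X f L z})"
  using finite_subset[OF chain_lengths_bounded] by simp

lemma alternating_rank_le: "alternating_rank X f y \<le> k"
  unfolding alternating_rank_def using chain_lengths_bounded finite_chain_lengths
  by (simp add: subset_eq)

lemma alternating_rank_mono: "y \<le> y' \<Longrightarrow> alternating_rank X f y \<le> alternating_rank X f y'"
  unfolding alternating_rank_def using finite_chain_lengths
  by (intro Max_mono) (auto intro: order_trans)

lemma alternating_chain_le_rank:
  "z \<le> y \<Longrightarrow> alternating_chain X f L z \<Longrightarrow> L \<le> alternating_rank X f y"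
  unfolding alternating_rank_def using finite_chain_lengths by (intro Max_ge) auto

lemma odd_alternating_rank:
  assumes "y \<in> X"
  shows "odd (alternating_rank X f y) = f y"
proof (rule ccontr)
  let ?r = "alternating_rank X f y"
  assume wrong_parity: "odd ?r \<noteq> f y"
  have "?r \<in> insert 0 {L. \<exists>z\<le>y. alternating_chain X f L z}"
    unfolding alternating_rank_def using finite_chain_lengths by (intro Max_in) auto
  then show False
  proof
    assume "?r = 0"
    then have "f y" using wrong_parity by simp
    then show False
      using alternating_chain_le_rank[OF order_refl alternating_chain_singleton[OF assms]] \<open>?r = 0\<close>
      by simp
  next
    assume "?r \<in> {L. \<exists>z\<le>y. alternating_chain X f L z}"
    then obtain z where z: "z \<le> y" "alternating_chain X f ?r z" by auto
    with wrong_parity have "f y \<noteq> f z" "z < y"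
      using alternating_chain_last_value by (auto simp: order.order_iff_strict)
    then show False
      using alternating_chain_le_rank[OF order_refl alternating_chain_snoc[OF z(2) _ assms]]
      by simp
  qed
qed

end

lemma k_monotone_on_odd_of_mono_bounded:
  fixes r :: "'a::order \<Rightarrow> nat"
  assumes "\<And>y y'. y \<le> y' \<Longrightarrow> r y \<le> r y'" and "\<And>y. r y \<le> k"
  shows "k_monotone_on k S (\<lambda>y. odd (r y))"
  unfolding k_monotone_on_def
proof
  assume "\<exists>x. (\<forall>i\<le>k. x i \<in> S) \<and> (\<forall>i<k. x i < x (Suc i)) \<and> odd (r (x 0)) \<and>
            (\<forall>i<k. odd (r (x i)) \<noteq> odd (r (x (Suc i))))"
  then obtain x where x: "\<forall>i<k. x i < x (Suc i)" "odd (r (x 0))"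
      "\<forall>i<k. odd (r (x i)) \<noteq> odd (r (x (Suc i)))"
    by blast
  have "Suc i \<le> r (x i)" if "i \<le> k" for i
    using that
  proof (induction i)
    case 0
    then show ?case using x(2) by (cases "r (x 0)") auto
  next
    case (Suc i)
    then have "i < k" by simp
    then have "r (x i) \<le> r (x (Suc i))" "r (x i) \<noteq> r (x (Suc i))"
      using x assms(1)[of "x i" "x (Suc i)"] by auto
    then show ?case using Suc.IH \<open>i < k\<close> by simp
  qed
  from this[of k] assms(2)[of "x k"] show False by simp
qed

theorem lemmaB7:
  fixes P X :: "'a::order set" and f :: "'a \<Rightarrow> bool" and k :: nat
  assumes "finite P" and "X \<subseteq> P" and "k_monotone_on k X f"
  shows "\<exists>g :: 'a \<Rightarrow> bool. (\<forall>x\<in>X. g x = f x) \<and> k_monotone_on k P g"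
proof (intro exI conjI)
  let ?g = "\<lambda>y. odd (alternating_rank X f y)"
  show "\<forall>x\<in>X. ?g x = f x"
    using odd_alternating_rank[OF assms(3)] by blast
  show "k_monotone_on k P ?g"
    using alternating_rank_mono[OF assms(3)] alternating_rank_le[OF assms(3)]
    by (rule k_monotone_on_odd_of_mono_bounded)
qed

end
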